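(* Let $K$ and $L$ be regular languages over an alphabet $\Sigma$. If for every $r\ge 1$ there is a tower of prefixes of height at least $r$ between $K$ and $L$, then there is an infinite tower of prefixes between $K$ and $L$.
   Context: A string $v$ is a prefix of $w$, written $v\le w$, if $w=vu$ for some string $u$. A sequence $(w_i)_{i=1}^r$ of strings is a tower of prefixes between languages $K$ and $L$ if $w_1\in K\cup L$ and for all $i=1,\dots,r-1$: $w_i\le w_{i+1}$, $w_i\in K$ implies $w_{i+1}\in L$, and $w_i\in L$ implies $w_{i+1}\in K$; $r$ is its height. An infinite tower of prefixes is an infinite sequence $(w_i)_{i\ge1}$ with the same properties. *)

theory Defs
  imports Main "HOL-Library.Sublist"
begin

definition regular_lang :: "'a set \<Rightarrow> 'a list set \<Rightarrow> bool" where
  "regular_lang \<Sigma> L \<longleftrightarrow> L \<subseteq> lists \<Sigma> \<and>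
     (\<exists>(Q::nat set) q0 \<delta> F. finite Q \<and> q0 \<in> Q \<and> (\<forall>q\<in>Q. \<forall>a\<in>\<Sigma>. \<delta> q a \<in> Q) \<and> F \<subseteq> Q \<and>
        L = {w \<in> lists \<Sigma>. fold (\<lambda>a q. \<delta> q a) w q0 \<in> F})"

text \<open>A (finite) tower of prefixes between K and L, given as the list [w_1,...,w_r]; its height is its length.\<close>
definition tower :: "'a list set \<Rightarrow> 'a list set \<Rightarrow> 'a list list \<Rightarrow> bool" where
  "tower K L ws \<longleftrightarrow> ws \<noteq> [] \<and> hd ws \<in> K \<union> L \<and>
     (\<forall>i. Suc i < length ws \<longrightarrow> prefix (ws ! i) (ws ! Suc i) \<and>
        (ws ! i \<in> K \<longrightarrow> ws ! Suc i \<in> L) \<and> (ws ! i \<in> L \<longrightarrow> ws ! Suc i \<in> K))"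

definition inf_tower :: "'a list set \<Rightarrow> 'a list set \<Rightarrow> (nat \<Rightarrow> 'a list) \<Rightarrow> bool" where
  "inf_tower K L w \<longleftrightarrow> w 0 \<in> K \<union> L \<and>
     (\<forall>i. prefix (w i) (w (Suc i)) \<and>
        (w i \<in> K \<longrightarrow> w (Suc i) \<in> L) \<and> (w i \<in> L \<longrightarrow> w (Suc i) \<in> K))"

end

theory Submission
  imports Defs
begin

text \<open>Replace the two regular languages by a right-invariant map \<open>f\<close> with finite range
(the state of the product automaton) that saturates both of them. A tower of height
exceeding the number of values of \<open>f\<close> has two members \<open>s = ws!i\<close> and \<open>s @ u = ws!j\<close>,
\<open>i < j\<close>, with equal \<open>f\<close>-value. Right invariance then lets the segment from \<open>ws!i\<close> to
\<open>ws!j\<close> be repeated after \<open>s @ u\<^sup>q\<close> for every \<open>q\<close>, without changing membership in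
\<open>K\<close> or \<open>L\<close>; concatenating these copies gives an infinite tower.\<close>

definition right_invariant :: "('a list \<Rightarrow> 'b) \<Rightarrow> bool" where
  "right_invariant f \<longleftrightarrow> (\<forall>u v w. f u = f v \<longrightarrow> f (u @ w) = f (v @ w))"

definition saturates :: "('a list \<Rightarrow> 'b) \<Rightarrow> 'a list set \<Rightarrow> bool" where
  "saturates f K \<longleftrightarrow> (\<forall>u v. f u = f v \<longrightarrow> (u \<in> K \<longleftrightarrow> v \<in> K))"

definition tower_step :: "'a list set \<Rightarrow> 'a list set \<Rightarrow> 'a list \<Rightarrow> 'a list \<Rightarrow> bool" where
  "tower_step K L u v \<longleftrightarrow> prefix u v \<and> (u \<in> K \<longrightarrow> v \<in> L) \<and> (u \<in> L \<longrightarrow> v \<in> K)"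

lemma right_invariantD: "right_invariant f \<Longrightarrow> f u = f v \<Longrightarrow> f (u @ w) = f (v @ w)"
  unfolding right_invariant_def by blast

lemma saturatesD: "saturates f K \<Longrightarrow> f u = f v \<Longrightarrow> u \<in> K \<longleftrightarrow> v \<in> K"
  unfolding saturates_def by blast

lemma right_invariant_pair:
  assumes "right_invariant f" "right_invariant g"
  shows "right_invariant (\<lambda>w. (f w, g w))"
  unfolding right_invariant_def
  using right_invariantD[OF assms(1)] right_invariantD[OF assms(2)] by blast

lemma saturates_pair_left: "saturates f K \<Longrightarrow> saturates (\<lambda>w. (f w, g w)) K"
  unfolding saturates_def by blast

lemma saturates_pair_right: "saturates g K \<Longrightarrow> saturates (\<lambda>w. (f w, g w)) K"
  unfolding saturates_def by blast

lemma finite_range_pair: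
  assumes "finite (range f)" "finite (range g)"
  shows "finite (range (\<lambda>w. (f w, g w)))"
proof (rule finite_subset)
  show "range (\<lambda>w. (f w, g w)) \<subseteq> range f \<times> range g" by blast
  show "finite (range f \<times> range g)" using assms by simp
qed

lemma fold_in_closed_states:
  assumes "\<forall>q\<in>Q. \<forall>a\<in>\<Sigma>. \<delta> q a \<in> Q" "w \<in> lists \<Sigma>" "q \<in> Q"
  shows "fold (\<lambda>a q. \<delta> q a) w q \<in> Q"
  using assms(2,3) by (induction w arbitrary: q) (auto simp: assms(1))

text \<open>The automaton state is tagged with \<open>None\<close> on words leaving the alphabet, where the
transition function is not controlled.\<close>

lemma regular_lang_saturation:
  assumes "regular_lang \<Sigma> K"
  obtains f :: "'a list \<Rightarrow> nat option"
  where "finite (range f)" "right_invariant f" "saturates f K"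
proof -
  obtain Q :: "nat set" and q0 \<delta> F where "finite Q" "q0 \<in> Q" and closed: "\<forall>q\<in>Q. \<forall>a\<in>\<Sigma>. \<delta> q a \<in> Q"
    and K: "K = {w \<in> lists \<Sigma>. fold (\<lambda>a q. \<delta> q a) w q0 \<in> F}"
    using assms unfolding regular_lang_def by auto
  define f where "f w = (if w \<in> lists \<Sigma> then Some (fold (\<lambda>a q. \<delta> q a) w q0) else None)" for w
  have "f w \<in> insert None (Some ` Q)" for w
    using fold_in_closed_states[OF closed, of w q0] \<open>q0 \<in> Q\<close> unfolding f_def by auto
  then have "finite (range f)"
    using \<open>finite Q\<close> by (meson finite_imageI finite_insert finite_subset image_subsetI)
  moreover have "right_invariant f"
    unfolding right_invariant_def f_def by (auto split: if_splits)
  moreover have "saturates f K"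
    unfolding saturates_def f_def K by (auto split: if_splits)
  ultimately show thesis by (rule that)
qed

lemma regular_langs_common_saturation:
  assumes "regular_lang \<Sigma> K" "regular_lang \<Sigma> L"
  obtains f :: "'a list \<Rightarrow> nat option \<times> nat option"
  where "finite (range f)" "right_invariant f" "saturates f K" "saturates f L"
proof -
  obtain g :: "'a list \<Rightarrow> nat option"
    where "finite (range g)" "right_invariant g" "saturates g K"
    using regular_lang_saturation[OF assms(1)] by blast
  moreover obtain h :: "'a list \<Rightarrow> nat option"
    where "finite (range h)" "right_invariant h" "saturates h L"
    using regular_lang_saturation[OF assms(2)] by blast
  ultimately show thesis
    by (intro that[of "\<lambda>w. (g w, h w)"])
      (simp_all add: finite_range_pair right_invariant_pair saturates_pair_left saturates_pair_right)
qed

lemma inf_tower_iff_tower_step: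
  "inf_tower K L w \<longleftrightarrow> w 0 \<in> K \<union> L \<and> (\<forall>k. tower_step K L (w k) (w (Suc k)))"
  unfolding inf_tower_def tower_step_def by blast

lemma tower_step_nth:
  "tower K L ws \<Longrightarrow> Suc k < length ws \<Longrightarrow> tower_step K L (ws ! k) (ws ! Suc k)"
  unfolding tower_def tower_step_def by blast

lemma tower_nth_prefix:
  assumes "tower K L ws" "a \<le> b" "b < length ws"
  shows "prefix (ws ! a) (ws ! b)"
  using assms(2,3)
proof (induction b rule: dec_induct)
  case (step b)
  then show ?case
    using tower_step_nth[OF assms(1), of b] prefix_order.trans unfolding tower_step_def by auto
qed simp

lemma tower_nth_mem:
  assumes "tower K L ws" "k < length ws"
  shows "ws ! k \<in> K \<union> L"
  using assms(2)
proof (induction k)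
  case 0
  then show ?case using assms(1) hd_conv_nth unfolding tower_def by fastforce
next
  case (Suc k)
  then show ?case using tower_step_nth[OF assms(1), of k] unfolding tower_step_def by auto
qed

lemma tower_nth_repeat:
  assumes "finite (range f)" "card (range f) < length ws"
  obtains i j where "i < j" "j < length ws" "f (ws ! i) = f (ws ! j)"
proof -
  have "card ((\<lambda>k. f (ws ! k)) ` {..<length ws}) \<le> card (range f)"
    using assms(1) by (intro card_mono) auto
  then have "\<not> inj_on (\<lambda>k. f (ws ! k)) {..<length ws}"
    using assms(2) by (intro pigeonhole) simp
  then obtain a b where "a < length ws" "b < length ws" "a \<noteq> b" "f (ws ! a) = f (ws ! b)"
    unfolding inj_on_def by auto
  then show thesis
    using that by (metis linorder_neqE_nat)
qed

lemma right_invariant_pump: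
  assumes "right_invariant f" "f (s @ u) = f s"
  shows "f (s @ concat (replicate q u)) = f s"
proof (induction q)
  case (Suc q)
  have "f ((s @ concat (replicate q u)) @ u) = f (s @ u)"
    using right_invariantD[OF assms(1) Suc.IH] .
  then show ?case
    using assms(2) by (simp add: replicate_append_same[symmetric])
qed simp

lemma tower_step_transport:
  assumes "right_invariant f" "saturates f K" "saturates f L" "f t = f s"
    and "tower_step K L (s @ x) (s @ y)"
  shows "tower_step K L (t @ x) (t @ y)"
proof -
  have "f (t @ z) = f (s @ z)" for z
    using right_invariantD[OF assms(1,4)] .
  then have "t @ z \<in> K \<longleftrightarrow> s @ z \<in> K" "t @ z \<in> L \<longleftrightarrow> s @ z \<in> L" for z
    using saturatesD[OF assms(2)] saturatesD[OF assms(3)] by blast+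
  then show ?thesis
    using assms(5) unfolding tower_step_def by simp
qed

lemma inf_tower_pump_segment:
  assumes f: "right_invariant f" "saturates f K" "saturates f L"
    and "s \<in> K \<union> L" "0 < p" "x 0 = []"
    and steps: "\<And>r. r < p \<Longrightarrow> tower_step K L (s @ x r) (s @ x (Suc r))"
    and loop: "f (s @ x p) = f s"
  shows "inf_tower K L (\<lambda>k. s @ concat (replicate (k div p) (x p)) @ x (k mod p))"
    (is "inf_tower K L ?w")
  unfolding inf_tower_iff_tower_step
proof (intro conjI allI)
  show "?w 0 \<in> K \<union> L" using \<open>s \<in> K \<union> L\<close> \<open>x 0 = []\<close> by simp
next
  fix k
  define q r where "q = k div p" and "r = k mod p"
  define t where "t = s @ concat (replicate q (x p))"
  have "r < p" using \<open>0 < p\<close> unfolding r_def by simp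
  have "f t = f s"
    unfolding t_def using right_invariant_pump[OF f(1) loop] .
  then have step: "tower_step K L (t @ x r) (t @ x (Suc r))"
    using tower_step_transport[OF f] steps[OF \<open>r < p\<close>] by simp
  show "tower_step K L (?w k) (?w (Suc k))"
  proof (cases "Suc r = p")
    case True
    then have "?w (Suc k) = t @ x (Suc r)"
      using \<open>x 0 = []\<close> unfolding q_def r_def t_def
      by (simp add: div_Suc mod_Suc replicate_append_same[symmetric])
    then show ?thesis using step unfolding q_def r_def t_def by simp
  next
    case False
    then show ?thesis using step unfolding q_def r_def t_def by (simp add: div_Suc mod_Suc)
  qed
qed

lemma inf_tower_if_tower_repeats:
  assumes f: "right_invariant f" "saturates f K" "saturates f L"
    and tw: "tower K L ws" and "i < j" "j < length ws" and "f (ws ! i) = f (ws ! j)"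
  shows "\<exists>w. inf_tower K L w"
proof -
  define s where "s = ws ! i"
  define x where "x r = drop (length s) (ws ! (i + r))" for r
  have split: "ws ! (i + r) = s @ x r" if "r \<le> j - i" for r
  proof -
    have "prefix s (ws ! (i + r))"
      unfolding s_def using tower_nth_prefix[OF tw] that \<open>i < j\<close> \<open>j < length ws\<close> by simp
    then show ?thesis
      unfolding x_def by (auto simp: prefix_def)
  qed
  have "s \<in> K \<union> L"
    unfolding s_def using tower_nth_mem[OF tw] \<open>i < j\<close> \<open>j < length ws\<close> by simp
  moreover have "tower_step K L (s @ x r) (s @ x (Suc r))" if "r < j - i" for r
    using tower_step_nth[OF tw, of "i + r"] split[of r] split[of "Suc r"] that \<open>j < length ws\<close>
    by simp
  moreover have "f (s @ x (j - i)) = f s"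
    using split[of "j - i"] \<open>i < j\<close> \<open>f (ws ! i) = f (ws ! j)\<close> unfolding s_def by simp
  moreover have "x 0 = []" unfolding x_def s_def by simp
  ultimately have "inf_tower K L
      (\<lambda>k. s @ concat (replicate (k div (j - i)) (x (j - i))) @ x (k mod (j - i)))"
    using \<open>i < j\<close> by (intro inf_tower_pump_segment[OF f]) auto
  then show ?thesis by blast
qed

theorem lemma13:
  fixes \<Sigma> :: "'a set" and K L :: "'a list set"
  assumes "finite \<Sigma>"
    and "regular_lang \<Sigma> K" and "regular_lang \<Sigma> L"
    and "\<forall>r\<ge>1. \<exists>ws. tower K L ws \<and> length ws \<ge> r"
  shows "\<exists>w. inf_tower K L w"
proof -
  obtain f :: "'a list \<Rightarrow> nat option \<times> nat option"
    where fin: "finite (range f)" and f: "right_invariant f" "saturates f K" "saturates f L"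
    using regular_langs_common_saturation[OF assms(2,3)] .
  obtain ws where tw: "tower K L ws" and "length ws \<ge> card (range f) + 1"
    using assms(4) by (meson le_add2)
  then obtain i j where "i < j" "j < length ws" "f (ws ! i) = f (ws ! j)"
    using tower_nth_repeat[OF fin] by (metis Suc_eq_plus1 Suc_le_eq)
  then show ?thesis
    using inf_tower_if_tower_repeats[OF f tw] by blast
qed

end
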